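(* Let $p$ be a prime, let $\mathcal{F}$ be a saturated fusion system on a finite $p$-group $S$, and let $G$ be a finite group which contains $S$ as a subgroup and realizes $\mathcal{F}$. Consider the square matrix \[ \bigl( |P\backslash G /Q| \bigr)_{P,Q}, \] whose rows and columns are indexed by the $G$-conjugacy classes of subgroups of $S$ and whose $(P,Q)$-entry is the number of $(P,Q)$-double cosets in $G$. Then the rank of this matrix (over $\mathbb{Q}$) is equal to the number of $\mathcal{F}$-conjugacy classes of cyclic subgroups of $S$.
   Context: A fusion system $\mathcal{F}$ on a finite $p$-group $S$ is a category whose objects are the subgroups of $S$ and whose morphisms $P\to Q$ are certain injective group homomorphisms, containing all maps induced by conjugation by elements of $S$ and closed under restriction and inverses of isomorphisms; "saturated" is the standard saturation axiom (Sylow-type axioms) of Broto–Levi–Oliver. Two subgroups $P,P'\leq S$ are $\mathcal{F}$-conjugate if there is an isomorphism $P\to P'$ in $\mathcal{F}$. A finite group $G$ containing $S$ (not necessarily as a Sylow subgroup) realizes $\mathcal{F}$ if for all $P,Q\leq S$ the morphisms $P\to Q$ in $\mathcal{F}$ are exactly the maps $u\mapsto gug^{-1}$ for $g\in G$ with $gPg^{-1}\leq Q$. In particular, two subgroups of $S$ are $G$-conjugate iff they are $\mathcal{F}$-conjugate. *)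

theory Defs
  imports "HOL-Algebra.Algebra" "Jordan_Normal_Form.DL_Rank"
begin

definition conjm :: "('a, 'b) monoid_scheme \<Rightarrow> 'a \<Rightarrow> 'a \<Rightarrow> 'a" where
  "conjm G g u = g \<otimes>\<^bsub>G\<^esub> u \<otimes>\<^bsub>G\<^esub> inv\<^bsub>G\<^esub> g"

definition cmap :: "('a, 'b) monoid_scheme \<Rightarrow> 'a \<Rightarrow> 'a set \<Rightarrow> ('a \<Rightarrow> 'a)" where
  "cmap G g P = restrict (conjm G g) P"

definition subs :: "('a, 'b) monoid_scheme \<Rightarrow> 'a set \<Rightarrow> 'a set set" where
  "subs G S = {P. subgroup P G \<and> P \<subseteq> S}"

definition normalizer_in :: "('a, 'b) monoid_scheme \<Rightarrow> 'a set \<Rightarrow> 'a set \<Rightarrow> 'a set" where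
  "normalizer_in G S P = {s \<in> S. conjm G s ` P = P}"

definition centralizer_in :: "('a, 'b) monoid_scheme \<Rightarrow> 'a set \<Rightarrow> 'a set \<Rightarrow> 'a set" where
  "centralizer_in G S P = {s \<in> S. \<forall>x\<in>P. s \<otimes>\<^bsub>G\<^esub> x = x \<otimes>\<^bsub>G\<^esub> s}"

definition double_cosets :: "('a, 'b) monoid_scheme \<Rightarrow> 'a set \<Rightarrow> 'a set \<Rightarrow> 'a set set" where
  "double_cosets G P Q =
     (\<lambda>g. {x \<otimes>\<^bsub>G\<^esub> g \<otimes>\<^bsub>G\<^esub> y | x y. x \<in> P \<and> y \<in> Q}) ` carrier G"

text \<open>A fusion system on S is given by its morphism sets Hom P Q (for P, Q subgroups
  of S); morphisms are injective homomorphisms P -> Q, represented as extensional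
  functions on P.\<close>

definition inj_hom_on :: "('a, 'b) monoid_scheme \<Rightarrow> 'a set \<Rightarrow> 'a set \<Rightarrow> ('a \<Rightarrow> 'a) \<Rightarrow> bool" where
  "inj_hom_on G P Q \<phi> \<longleftrightarrow> \<phi> \<in> extensional P \<and> \<phi> ` P \<subseteq> Q \<and> inj_on \<phi> P \<and>
     (\<forall>x\<in>P. \<forall>y\<in>P. \<phi> (x \<otimes>\<^bsub>G\<^esub> y) = \<phi> x \<otimes>\<^bsub>G\<^esub> \<phi> y)"

definition fusion_system ::
  "('a, 'b) monoid_scheme \<Rightarrow> 'a set \<Rightarrow> ('a set \<Rightarrow> 'a set \<Rightarrow> ('a \<Rightarrow> 'a) set) \<Rightarrow> bool" where
  "fusion_system G S Hom \<longleftrightarrow>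
     (\<forall>P Q. (P \<notin> subs G S \<or> Q \<notin> subs G S) \<longrightarrow> Hom P Q = {}) \<and>
     (\<forall>P\<in>subs G S. \<forall>Q\<in>subs G S. \<forall>\<phi>\<in>Hom P Q. inj_hom_on G P Q \<phi>) \<and>
     \<comment> \<open>contains the conjugation maps by elements of S\<close>
     (\<forall>P\<in>subs G S. \<forall>Q\<in>subs G S. \<forall>s\<in>S. conjm G s ` P \<subseteq> Q \<longrightarrow> cmap G s P \<in> Hom P Q) \<and>
     \<comment> \<open>closed under composition\<close>
     (\<forall>P Q R \<phi> \<psi>. \<phi> \<in> Hom P Q \<longrightarrow> \<psi> \<in> Hom Q R \<longrightarrow> restrict (\<psi> \<circ> \<phi>) P \<in> Hom P R) \<and>
     \<comment> \<open>closed under restriction (in domain and codomain)\<close>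
     (\<forall>P Q P' Q' \<phi>. \<phi> \<in> Hom P Q \<longrightarrow> P' \<in> subs G S \<longrightarrow> Q' \<in> subs G S \<longrightarrow> P' \<subseteq> P \<longrightarrow>
        \<phi> ` P' \<subseteq> Q' \<longrightarrow> restrict \<phi> P' \<in> Hom P' Q') \<and>
     \<comment> \<open>closed under inverses of isomorphisms\<close>
     (\<forall>P Q \<phi>. \<phi> \<in> Hom P Q \<longrightarrow> \<phi> ` P = Q \<longrightarrow> restrict (inv_into P \<phi>) Q \<in> Hom Q P)"

definition F_conjugate ::
  "('a set \<Rightarrow> 'a set \<Rightarrow> ('a \<Rightarrow> 'a) set) \<Rightarrow> 'a set \<Rightarrow> 'a set \<Rightarrow> bool" where
  "F_conjugate Hom P Q \<longleftrightarrow> (\<exists>\<phi>\<in>Hom P Q. \<phi> ` P = Q)"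

definition fully_normalized ::
  "('a, 'b) monoid_scheme \<Rightarrow> 'a set \<Rightarrow> ('a set \<Rightarrow> 'a set \<Rightarrow> ('a \<Rightarrow> 'a) set) \<Rightarrow> 'a set \<Rightarrow> bool" where
  "fully_normalized G S Hom P \<longleftrightarrow> P \<in> subs G S \<and>
     (\<forall>P'. F_conjugate Hom P P' \<longrightarrow> card (normalizer_in G S P') \<le> card (normalizer_in G S P))"

definition fully_centralized ::
  "('a, 'b) monoid_scheme \<Rightarrow> 'a set \<Rightarrow> ('a set \<Rightarrow> 'a set \<Rightarrow> ('a \<Rightarrow> 'a) set) \<Rightarrow> 'a set \<Rightarrow> bool" where
  "fully_centralized G S Hom P \<longleftrightarrow> P \<in> subs G S \<and>
     (\<forall>P'. F_conjugate Hom P P' \<longrightarrow> card (centralizer_in G S P') \<le> card (centralizer_in G S P))"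

definition Aut_S :: "('a, 'b) monoid_scheme \<Rightarrow> 'a set \<Rightarrow> 'a set \<Rightarrow> ('a \<Rightarrow> 'a) set" where
  "Aut_S G S P = (\<lambda>s. cmap G s P) ` normalizer_in G S P"

definition N_phi ::
  "('a, 'b) monoid_scheme \<Rightarrow> 'a set \<Rightarrow> 'a set \<Rightarrow> ('a \<Rightarrow> 'a) \<Rightarrow> 'a set" where
  "N_phi G S P \<phi> = {g \<in> normalizer_in G S P. \<exists>h \<in> normalizer_in G S (\<phi> ` P).
      \<forall>y \<in> \<phi> ` P. \<phi> (conjm G g (inv_into P \<phi> y)) = conjm G h y}"

text \<open>Saturation in the sense of Broto--Levi--Oliver.\<close>
definition saturated ::
  "nat \<Rightarrow> ('a, 'b) monoid_scheme \<Rightarrow> 'a set \<Rightarrow> ('a set \<Rightarrow> 'a set \<Rightarrow> ('a \<Rightarrow> 'a) set) \<Rightarrow> bool" where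
  "saturated p G S Hom \<longleftrightarrow>
     \<comment> \<open>Axiom (I): fully normalized implies fully centralized and Aut_S(P) Sylow in Aut_F(P)\<close>
     (\<forall>P. fully_normalized G S Hom P \<longrightarrow>
        fully_centralized G S Hom P \<and>
        Aut_S G S P \<subseteq> Hom P P \<and>
        (\<exists>m. card (Hom P P) = card (Aut_S G S P) * m \<and> \<not> p dvd m)) \<and>
     \<comment> \<open>Axiom (II): extension of isomorphisms to N_phi when the target is fully centralized\<close>
     (\<forall>P \<phi>. \<phi> \<in> Hom P (\<phi> ` P) \<longrightarrow> fully_centralized G S Hom (\<phi> ` P) \<longrightarrow>
        (\<exists>\<psi> \<in> Hom (N_phi G S P \<phi>) S. \<forall>x\<in>P. \<psi> x = \<phi> x))"

definition realizes ::
  "('a, 'b) monoid_scheme \<Rightarrow> 'a set \<Rightarrow> ('a set \<Rightarrow> 'a set \<Rightarrow> ('a \<Rightarrow> 'a) set) \<Rightarrow> bool" where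
  "realizes G S Hom \<longleftrightarrow> (\<forall>P\<in>subs G S. \<forall>Q\<in>subs G S.
     Hom P Q = {cmap G g P | g. g \<in> carrier G \<and> conjm G g ` P \<subseteq> Q})"

definition G_conj_classes :: "('a, 'b) monoid_scheme \<Rightarrow> 'a set \<Rightarrow> 'a set set set" where
  "G_conj_classes G S = subs G S //
     {(P, Q). P \<in> subs G S \<and> Q \<in> subs G S \<and> (\<exists>g\<in>carrier G. Q = conjm G g ` P)}"

text \<open>Matrix (|P\G/Q|)_{P,Q} over the rationals, with rows/columns indexed by the
  G-conjugacy classes of subgroups of S via a fixed enumeration of these classes, and
  entries computed at a chosen representative of each class.\<close>
definition double_coset_matrix :: "('a, 'b) monoid_scheme \<Rightarrow> 'a set \<Rightarrow> rat mat" where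
  "double_coset_matrix G S =
     (let Cl = G_conj_classes G S; k = card Cl;
          e = (SOME e. bij_betw e {0..<k} Cl);
          rep = (\<lambda>C. SOME P. P \<in> C)
      in mat k k (\<lambda>(i, j). of_nat (card (double_cosets G (rep (e i)) (rep (e j))))))"

definition cyclic_subs :: "('a, 'b) monoid_scheme \<Rightarrow> 'a set \<Rightarrow> 'a set set" where
  "cyclic_subs G S = {P. \<exists>x\<in>S. P = generate G {x}}"

definition F_classes_cyclic ::
  "('a, 'b) monoid_scheme \<Rightarrow> 'a set \<Rightarrow> ('a set \<Rightarrow> 'a set \<Rightarrow> ('a \<Rightarrow> 'a) set) \<Rightarrow> 'a set set set" where
  "F_classes_cyclic G S Hom = cyclic_subs G S //
     {(P, Q). P \<in> cyclic_subs G S \<and> Q \<in> cyclic_subs G S \<and> F_conjugate Hom P Q}"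

end

(*
  Let t(C, P) be the number of g in G with g C g^-1 contained in P. The map P x Q -> PgQ,
  (x, y) |-> xgy, has fibres of size |Q \<inter> g^-1 P g|; counting first over g and then over the
  elements of Q gives |P\G/Q| |P| |Q| |G| = \<Sum>_{y \<in> G} t(y, P) t(y, Q). Here t(y, P) = t(<y>, P)
  depends only on the G-class of <y>, and vanishes unless <y> is G-conjugate to a cyclic subgroup
  of S. Grouping the y by the class C_i of <y>, with N_i elements y in class C_i, yields
    |P\G/Q| = \<Sum>_i (t(C_i, P) / |P|) (N_i / |G|) (t(C_i, Q) / |Q|),
  with i ranging over the classes of cyclic subgroups of S, so the matrix is a sum of that many
  rank one matrices. On the rows and columns of the cyclic classes it factors as U W U^T, where
  U is triangular with nonzero diagonal once the classes are ordered by order (C_j is never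
  conjugate into a different C_i with |C_i| \<le> |C_j|), so it is invertible. Since G realizes the
  fusion system, F-conjugacy is G-conjugacy.
*)
theory Submission
  imports Defs "Jordan_Normal_Form.DL_Rank_Submatrix"
begin

definition transporter :: "('a, 'b) monoid_scheme \<Rightarrow> 'a set \<Rightarrow> 'a set \<Rightarrow> 'a set" where
  "transporter G C P = {h \<in> carrier G. conjm G h ` C \<subseteq> P}"

context group
begin

lemma inv_mult_cancel_left [simp]: "g \<in> carrier G \<Longrightarrow> z \<in> carrier G \<Longrightarrow> inv g \<otimes> (g \<otimes> z) = z"
  by (simp add: m_assoc[symmetric])

lemma mult_inv_cancel_left [simp]: "g \<in> carrier G \<Longrightarrow> z \<in> carrier G \<Longrightarrow> g \<otimes> (inv g \<otimes> z) = z"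
  by (simp add: m_assoc[symmetric])

lemma conjm_closed [simp]: "g \<in> carrier G \<Longrightarrow> x \<in> carrier G \<Longrightarrow> conjm G g x \<in> carrier G"
  unfolding conjm_def by simp

lemma conjm_one [simp]: "x \<in> carrier G \<Longrightarrow> conjm G \<one> x = x"
  unfolding conjm_def by simp

lemma conjm_mult: "g \<in> carrier G \<Longrightarrow> h \<in> carrier G \<Longrightarrow> x \<in> carrier G \<Longrightarrow>
    conjm G (g \<otimes> h) x = conjm G g (conjm G h x)"
  unfolding conjm_def by (simp add: inv_mult_group m_assoc)

lemma conjm_inv_conjm [simp]:
  "g \<in> carrier G \<Longrightarrow> x \<in> carrier G \<Longrightarrow> conjm G (inv g) (conjm G g x) = x"
  by (metis conjm_mult inv_closed l_inv conjm_one)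

lemma conjm_conjm_inv [simp]:
  "g \<in> carrier G \<Longrightarrow> x \<in> carrier G \<Longrightarrow> conjm G g (conjm G (inv g) x) = x"
  by (metis conjm_inv_conjm inv_closed inv_inv)

lemma inj_on_conjm: "g \<in> carrier G \<Longrightarrow> inj_on (conjm G g) (carrier G)"
  by (metis conjm_inv_conjm inj_onI)

lemma conjm_m_distrib: "g \<in> carrier G \<Longrightarrow> x \<in> carrier G \<Longrightarrow> y \<in> carrier G \<Longrightarrow>
    conjm G g (x \<otimes> y) = conjm G g x \<otimes> conjm G g y"
  unfolding conjm_def by (simp add: m_assoc)

lemma group_hom_conjm: "g \<in> carrier G \<Longrightarrow> group_hom G G (conjm G g)"
  by unfold_locales (auto intro!: homI simp: conjm_m_distrib)

lemma image_conjm_generate: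
  "g \<in> carrier G \<Longrightarrow> x \<in> carrier G \<Longrightarrow> conjm G g ` generate G {x} = generate G {conjm G g x}"
  using group_hom.generate_img[OF group_hom_conjm, of g "{x}"] by simp

lemma image_conjm_mult: "g \<in> carrier G \<Longrightarrow> h \<in> carrier G \<Longrightarrow> A \<subseteq> carrier G \<Longrightarrow>
    conjm G (g \<otimes> h) ` A = conjm G g ` conjm G h ` A"
  by (auto simp: conjm_mult image_iff subset_iff)

lemma image_conjm_one: "A \<subseteq> carrier G \<Longrightarrow> conjm G \<one> ` A = A"
  by (auto simp: subset_iff image_iff)

lemma image_conjm_inv_conjm: "g \<in> carrier G \<Longrightarrow> A \<subseteq> carrier G \<Longrightarrow> conjm G (inv g) ` conjm G g ` A = A"
  by (auto simp: subset_iff image_iff)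

lemma image_conjm_generate_subset_iff:
  assumes "h \<in> carrier G" "y \<in> carrier G" "subgroup P G"
  shows "conjm G h ` generate G {y} \<subseteq> P \<longleftrightarrow> conjm G h y \<in> P"
  using generate_subgroup_incl[OF _ assms(3), of "{conjm G h y}"] generate.incl[of _ "{_}" G]
  by (auto simp: image_conjm_generate[OF assms(1,2)])

definition conjugate :: "'a set \<Rightarrow> 'a set \<Rightarrow> bool" where
  "conjugate A B \<longleftrightarrow> (\<exists>g\<in>carrier G. B = conjm G g ` A)"

lemma conjugate_refl: "A \<subseteq> carrier G \<Longrightarrow> conjugate A A"
  unfolding conjugate_def using image_conjm_one by (metis one_closed)

lemma conjugate_sym: "A \<subseteq> carrier G \<Longrightarrow> conjugate A B \<Longrightarrow> conjugate B A"
  unfolding conjugate_def using image_conjm_inv_conjm by (metis inv_closed)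

lemma conjugate_trans: "A \<subseteq> carrier G \<Longrightarrow> conjugate A B \<Longrightarrow> conjugate B C \<Longrightarrow> conjugate A C"
  unfolding conjugate_def using image_conjm_mult by (metis m_closed)

lemma conjugate_card: "A \<subseteq> carrier G \<Longrightarrow> conjugate A B \<Longrightarrow> card B = card A"
  unfolding conjugate_def by (metis card_image inj_on_subset inj_on_conjm)

lemma conjugate_generate:
  "g \<in> carrier G \<Longrightarrow> y \<in> carrier G \<Longrightarrow> conjugate (generate G {y}) (generate G {conjm G g y})"
  unfolding conjugate_def using image_conjm_generate by metis

lemma mem_transporter_image_conjm_iff:
  assumes "C \<subseteq> carrier G" "k \<in> carrier G" "h \<in> carrier G"
  shows "h \<in> transporter G (conjm G k ` C) P \<longleftrightarrow> h \<otimes> k \<in> transporter G C P"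
  using assms image_conjm_mult[of h k C] by (simp add: transporter_def)

lemma bij_betw_transporter_conjm:
  assumes C: "C \<subseteq> carrier G" and k: "k \<in> carrier G"
  shows "bij_betw (\<lambda>h. h \<otimes> k) (transporter G (conjm G k ` C) P) (transporter G C P)"
proof (rule bij_betw_byWitness[where f' = "\<lambda>h. h \<otimes> inv k"])
  have sub: "\<And>A h. h \<in> transporter G A P \<Longrightarrow> h \<in> carrier G"
    by (simp add: transporter_def)
  show "\<forall>h\<in>transporter G (conjm G k ` C) P. h \<otimes> k \<otimes> inv k = h"
    and "\<forall>h\<in>transporter G C P. h \<otimes> inv k \<otimes> k = h"
    using sub k by (simp_all add: m_assoc)
  show "(\<lambda>h. h \<otimes> k) ` transporter G (conjm G k ` C) P \<subseteq> transporter G C P"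
    using sub mem_transporter_image_conjm_iff[OF C k] by blast
  show "(\<lambda>h. h \<otimes> inv k) ` transporter G C P \<subseteq> transporter G (conjm G k ` C) P"
    using sub k mem_transporter_image_conjm_iff[OF C k] by (auto simp: m_assoc)
qed

lemma card_transporter_conjugate:
  assumes "A \<subseteq> carrier G" "conjugate A B"
  shows "card (transporter G B P) = card (transporter G A P)"
proof -
  obtain k where "k \<in> carrier G" "B = conjm G k ` A"
    using assms(2) unfolding conjugate_def by blast
  then show ?thesis
    using bij_betw_same_card[OF bij_betw_transporter_conjm[OF assms(1)]] by simp
qed

lemma transporter_singleton: "transporter G {y} P = {h \<in> carrier G. conjm G h y \<in> P}"
  by (simp add: transporter_def)

lemma transporter_generate:
  "y \<in> carrier G \<Longrightarrow> subgroup P G \<Longrightarrow> transporter G (generate G {y}) P = transporter G {y} P"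
  unfolding transporter_singleton transporter_def using image_conjm_generate_subset_iff by blast

end

section \<open>Counting double cosets\<close>

definition double_coset :: "('a, 'b) monoid_scheme \<Rightarrow> 'a set \<Rightarrow> 'a set \<Rightarrow> 'a \<Rightarrow> 'a set" where
  "double_coset G P Q g = {x \<otimes>\<^bsub>G\<^esub> g \<otimes>\<^bsub>G\<^esub> y | x y. x \<in> P \<and> y \<in> Q}"

lemma double_cosets_eq_image: "double_cosets G P Q = double_coset G P Q ` carrier G"
  unfolding double_cosets_def double_coset_def ..

context group
begin

lemma double_coset_self:
  "subgroup P G \<Longrightarrow> subgroup Q G \<Longrightarrow> g \<in> carrier G \<Longrightarrow> g \<in> double_coset G P Q g"
  unfolding double_coset_def
  by (rule CollectI, rule exI[of _ \<one>], rule exI[of _ \<one>]) (simp add: subgroup.one_closed)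

lemma double_coset_subset_carrier:
  "subgroup P G \<Longrightarrow> subgroup Q G \<Longrightarrow> g \<in> carrier G \<Longrightarrow> double_coset G P Q g \<subseteq> carrier G"
  unfolding double_coset_def by (auto dest: subgroup.mem_carrier)

lemma double_coset_subset:
  assumes P: "subgroup P G" and Q: "subgroup Q G" and g: "g \<in> carrier G"
    and g': "g' \<in> double_coset G P Q g"
  shows "double_coset G P Q g' \<subseteq> double_coset G P Q g"
proof
  obtain x0 y0 where x0: "x0 \<in> P" and y0: "y0 \<in> Q" and g'_eq: "g' = x0 \<otimes> g \<otimes> y0"
    using g' unfolding double_coset_def by blast
  fix z assume "z \<in> double_coset G P Q g'"
  then obtain x y where x: "x \<in> P" and y: "y \<in> Q" and z: "z = x \<otimes> g' \<otimes> y"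
    unfolding double_coset_def by blast
  have "z = (x \<otimes> x0) \<otimes> g \<otimes> (y0 \<otimes> y)"
    using x y x0 y0 g P Q unfolding z g'_eq by (simp add: subgroup.mem_carrier m_assoc)
  then show "z \<in> double_coset G P Q g"
    using x y x0 y0 P Q unfolding double_coset_def by (blast intro: subgroup.m_closed)
qed

lemma double_coset_eq:
  assumes P: "subgroup P G" and Q: "subgroup Q G" and g: "g \<in> carrier G"
    and g': "g' \<in> double_coset G P Q g"
  shows "double_coset G P Q g' = double_coset G P Q g"
proof -
  obtain x0 y0 where x0: "x0 \<in> P" and y0: "y0 \<in> Q" and g'_eq: "g' = x0 \<otimes> g \<otimes> y0"
    using g' unfolding double_coset_def by blast
  have x0': "x0 \<in> carrier G" and y0': "y0 \<in> carrier G"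
    using x0 y0 P Q by (auto simp: subgroup.mem_carrier)
  have "g = inv x0 \<otimes> g' \<otimes> inv y0"
    using x0' y0' g unfolding g'_eq by (simp add: m_assoc)
  then have "g \<in> double_coset G P Q g'"
    using x0 y0 P Q unfolding double_coset_def by (blast intro: subgroup.m_inv_closed)
  moreover have "g' \<in> carrier G"
    using g' double_coset_subset_carrier[OF P Q g] by blast
  ultimately show ?thesis
    using double_coset_subset[OF P Q] g g' by (meson subset_antisym)
qed

lemma double_coset_fiber:
  assumes P: "subgroup P G" and Q: "subgroup Q G" and g: "g \<in> carrier G"
    and x0: "x0 \<in> P" and y0: "y0 \<in> Q"
  shows "{(x, y) \<in> P \<times> Q. x \<otimes> g \<otimes> y = x0 \<otimes> g \<otimes> y0} =
     (\<lambda>q. (x0 \<otimes> conjm G g q, inv q \<otimes> y0)) ` {q \<in> Q. conjm G g q \<in> P}"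
proof (intro equalityI subsetI)
  have x0': "x0 \<in> carrier G" and y0': "y0 \<in> carrier G"
    using x0 y0 P Q by (auto simp: subgroup.mem_carrier)
  fix pq assume "pq \<in> {(x, y) \<in> P \<times> Q. x \<otimes> g \<otimes> y = x0 \<otimes> g \<otimes> y0}"
  then obtain x y where pq: "pq = (x, y)" and x: "x \<in> P" and y: "y \<in> Q"
    and eq: "x \<otimes> g \<otimes> y = x0 \<otimes> g \<otimes> y0"
    by blast
  have x': "x \<in> carrier G" and y': "y \<in> carrier G"
    using x y P Q by (auto simp: subgroup.mem_carrier)
  define q where "q = y0 \<otimes> inv y"
  have "conjm G g q = inv x0 \<otimes> (x0 \<otimes> g \<otimes> y0) \<otimes> inv y \<otimes> inv g"
    using x0' y0' y' g by (simp add: conjm_def q_def m_assoc)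
  also have "\<dots> = inv x0 \<otimes> x"
    using x' y' x0' g by (simp add: eq[symmetric] m_assoc)
  finally have conj_q: "conjm G g q = inv x0 \<otimes> x" .
  have "q \<in> Q"
    unfolding q_def using y y0 Q by (auto intro: subgroup.m_closed subgroup.m_inv_closed)
  moreover have "conjm G g q \<in> P"
    unfolding conj_q using x x0 P by (auto intro: subgroup.m_closed subgroup.m_inv_closed)
  moreover have "x = x0 \<otimes> conjm G g q"
    using x' x0' by (simp add: conj_q)
  moreover have "y = inv q \<otimes> y0"
    using y' y0' by (simp add: q_def inv_mult_group m_assoc)
  ultimately show "pq \<in> (\<lambda>q. (x0 \<otimes> conjm G g q, inv q \<otimes> y0)) ` {q \<in> Q. conjm G g q \<in> P}"
    unfolding pq by blast
next
  have x0': "x0 \<in> carrier G" and y0': "y0 \<in> carrier G"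
    using x0 y0 P Q by (auto simp: subgroup.mem_carrier)
  fix pq assume "pq \<in> (\<lambda>q. (x0 \<otimes> conjm G g q, inv q \<otimes> y0)) ` {q \<in> Q. conjm G g q \<in> P}"
  then obtain q where q: "q \<in> Q" and qP: "conjm G g q \<in> P"
    and pq: "pq = (x0 \<otimes> conjm G g q, inv q \<otimes> y0)"
    by blast
  have "q \<in> carrier G" using q Q by (simp add: subgroup.mem_carrier)
  then have "x0 \<otimes> conjm G g q \<otimes> g \<otimes> (inv q \<otimes> y0) = x0 \<otimes> g \<otimes> y0"
    using x0' y0' g by (simp add: conjm_def m_assoc)
  then show "pq \<in> {(x, y) \<in> P \<times> Q. x \<otimes> g \<otimes> y = x0 \<otimes> g \<otimes> y0}"
    using q qP x0 y0 P Q unfolding pq by (auto intro: subgroup.m_closed subgroup.m_inv_closed)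
qed

lemma card_double_coset_mult:
  assumes P: "subgroup P G" and Q: "subgroup Q G" and g: "g \<in> carrier G"
    and fin: "finite (carrier G)"
  shows "card (double_coset G P Q g) * card {q \<in> Q. conjm G g q \<in> P} = card P * card Q"
proof -
  let ?f = "\<lambda>(x, y). x \<otimes> g \<otimes> y"
  have fin_PQ: "finite (P \<times> Q)"
    using P Q fin by (meson finite_SigmaI finite_subset subgroup.subset)
  have img: "?f ` (P \<times> Q) = double_coset G P Q g"
    unfolding double_coset_def by auto
  have fiber: "card {pq \<in> P \<times> Q. ?f pq = z} = card {q \<in> Q. conjm G g q \<in> P}"
    if z_mem: "z \<in> double_coset G P Q g" for z
  proof -
    obtain x0 y0 where x0: "x0 \<in> P" and y0: "y0 \<in> Q" and z: "z = x0 \<otimes> g \<otimes> y0"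
      using z_mem unfolding double_coset_def by blast
    have "inj_on (\<lambda>q. (x0 \<otimes> conjm G g q, inv q \<otimes> y0)) {q \<in> Q. conjm G g q \<in> P}"
      using Q y0 by (intro inj_onI) (auto simp: subgroup.mem_carrier)
    moreover have "{pq \<in> P \<times> Q. ?f pq = z} = {(x, y) \<in> P \<times> Q. x \<otimes> g \<otimes> y = x0 \<otimes> g \<otimes> y0}"
      unfolding z by auto
    ultimately show ?thesis
      using double_coset_fiber[OF P Q g x0 y0] by (simp add: card_image)
  qed
  have "card P * card Q = (\<Sum>pq\<in>P \<times> Q. 1)"
    by (simp add: card_cartesian_product)
  also have "\<dots> = (\<Sum>z\<in>?f ` (P \<times> Q). card {pq \<in> P \<times> Q. ?f pq = z})"
    using sum.image_gen[OF fin_PQ, of "\<lambda>_. 1::nat" ?f] by simp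
  also have "\<dots> = card (double_coset G P Q g) * card {q \<in> Q. conjm G g q \<in> P}"
    by (simp add: img fiber)
  finally show ?thesis by simp
qed

lemma card_double_cosets_mult:
  assumes P: "subgroup P G" and Q: "subgroup Q G" and fin: "finite (carrier G)"
  shows "card (double_cosets G P Q) * (card P * card Q) =
    (\<Sum>g\<in>carrier G. card {q \<in> Q. conjm G g q \<in> P})"
proof -
  let ?k = "\<lambda>g. card {q \<in> Q. conjm G g q \<in> P}"
  have sum_over_coset: "sum ?k {g \<in> carrier G. double_coset G P Q g = D} = card P * card Q"
    if "D \<in> double_cosets G P Q" for D
  proof -
    obtain g0 where g0: "g0 \<in> carrier G" and D: "D = double_coset G P Q g0"
      using \<open>D \<in> double_cosets G P Q\<close> unfolding double_cosets_eq_image by blast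
    have D_sub: "D \<subseteq> carrier G"
      unfolding D by (rule double_coset_subset_carrier[OF P Q g0])
    have fiber: "{g \<in> carrier G. double_coset G P Q g = D} = D"
      using D_sub double_coset_self[OF P Q] double_coset_eq[OF P Q g0] unfolding D by blast
    have "card D > 0"
      using D_sub double_coset_self[OF P Q g0] fin unfolding D by (auto simp: card_gt_0_iff finite_subset)
    have "card D * sum ?k D = (\<Sum>g\<in>D. card (double_coset G P Q g) * ?k g)"
      using D_sub double_coset_eq[OF P Q g0] unfolding D by (auto simp: sum_distrib_left)
    also have "\<dots> = (\<Sum>g\<in>D. card P * card Q)"
      using D_sub card_double_coset_mult[OF P Q _ fin] by (intro sum.cong) auto
    finally show ?thesis
      using \<open>card D > 0\<close> unfolding fiber by simp
  qed
  have "(\<Sum>g\<in>carrier G. ?k g) =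
      (\<Sum>D\<in>double_cosets G P Q. sum ?k {g \<in> carrier G. double_coset G P Q g = D})"
    unfolding double_cosets_eq_image by (rule sum.image_gen[OF fin])
  also have "\<dots> = card (double_cosets G P Q) * (card P * card Q)"
    by (simp add: sum_over_coset)
  finally show ?thesis by simp
qed

lemma sum_card_conj_mem_eq_sum_card_transporter:
  assumes "finite (carrier G)" "finite Q"
  shows "(\<Sum>g\<in>carrier G. card {q \<in> Q. conjm G g q \<in> P}) = (\<Sum>q\<in>Q. card (transporter G {q} P))"
proof -
  have "(\<Sum>g\<in>carrier G. card {q \<in> Q. conjm G g q \<in> P}) =
      (\<Sum>g\<in>carrier G. \<Sum>q\<in>Q. if conjm G g q \<in> P then 1 else 0)"
    using assms(2) by (simp add: sum.inter_filter[symmetric])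
  also have "\<dots> = (\<Sum>q\<in>Q. \<Sum>g\<in>carrier G. if conjm G g q \<in> P then 1 else 0)"
    by (rule sum.swap)
  also have "\<dots> = (\<Sum>q\<in>Q. card (transporter G {q} P))"
    using assms(1) by (simp add: transporter_singleton sum.inter_filter[symmetric])
  finally show ?thesis .
qed

lemma card_transporter_conjm:
  "y \<in> carrier G \<Longrightarrow> h \<in> carrier G \<Longrightarrow>
    card (transporter G {conjm G h y} Q) = card (transporter G {y} Q)"
  using card_transporter_conjugate[of "{y}" "{conjm G h y}"] unfolding conjugate_def by auto

lemma sum_transporter_products:
  assumes P: "subgroup P G" and fin: "finite (carrier G)"
  shows "(\<Sum>y\<in>carrier G. card (transporter G {y} P) * card (transporter G {y} Q)) =
    card (carrier G) * (\<Sum>x\<in>P. card (transporter G {x} Q))"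
proof -
  let ?t = "\<lambda>y. card (transporter G {y} Q)"
  have sum_conj_into_P: "(\<Sum>y\<in>{y \<in> carrier G. conjm G h y \<in> P}. ?t y) = (\<Sum>x\<in>P. ?t x)"
    if h: "h \<in> carrier G" for h
  proof -
    have "bij_betw (conjm G h) {y \<in> carrier G. conjm G h y \<in> P} P"
      using h subgroup.subset[OF P] inj_on_subset[OF inj_on_conjm[OF h]]
      by (auto simp: bij_betw_def image_iff) (metis conjm_closed conjm_conjm_inv inv_closed subsetD)
    then show ?thesis
      using h by (simp add: sum.reindex_bij_betw[symmetric] card_transporter_conjm)
  qed
  have "(\<Sum>y\<in>carrier G. card (transporter G {y} P) * ?t y) =
      (\<Sum>y\<in>carrier G. \<Sum>h\<in>carrier G. if conjm G h y \<in> P then ?t y else 0)"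
    using fin by (simp add: transporter_singleton sum.inter_filter[symmetric])
  also have "\<dots> = (\<Sum>h\<in>carrier G. \<Sum>y\<in>carrier G. if conjm G h y \<in> P then ?t y else 0)"
    by (rule sum.swap)
  also have "\<dots> = (\<Sum>h\<in>carrier G. \<Sum>x\<in>P. ?t x)"
    using fin by (intro sum.cong[OF refl]) (simp add: sum.inter_filter[symmetric] sum_conj_into_P)
  finally show ?thesis by simp
qed

lemma card_double_cosets_formula:
  assumes P: "subgroup P G" and Q: "subgroup Q G" and fin: "finite (carrier G)"
  shows "card (double_cosets G P Q) * (card P * card Q) * card (carrier G) =
    (\<Sum>y\<in>carrier G. card (transporter G {y} P) * card (transporter G {y} Q))"
proof -
  have "finite Q"
    using Q fin finite_subset subgroup.subset by blast
  then show ?thesis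
    using sum_transporter_products[OF Q fin, of P]
      card_double_cosets_mult[OF P Q fin] sum_card_conj_mem_eq_sum_card_transporter[OF fin]
    by (simp add: mult.commute)
qed

end

section \<open>Rank of sums of rank one matrices\<close>

lemma bij_betw_pick: "finite L \<Longrightarrow> bij_betw (pick L) {..<card L} L"
proof (rule bij_betw_byWitness[where f' = "\<lambda>l. card {a \<in> L. a < l}"])
  assume L: "finite L"
  show "\<forall>k\<in>{..<card L}. card {a \<in> L. a < pick L k} = k"
    by (simp add: card_pick)
  show "\<forall>l\<in>L. pick L (card {a \<in> L. a < l}) = l"
    by (simp add: pick_card_in_set)
  show "pick L ` {..<card L} \<subseteq> L"
    by (auto simp: pick_in_set)
  show "(\<lambda>l. card {a \<in> L. a < l}) ` L \<subseteq> {..<card L}"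
    using L by (auto intro!: psubset_card_mono)
qed

lemma rank_sum_products_le:
  fixes u v :: "'i \<Rightarrow> nat \<Rightarrow> 'a :: field"
  assumes "finite L"
  shows "vec_space.rank n (mat n nc (\<lambda>(i, j). \<Sum>l\<in>L. u l i * v l j)) \<le> card L"
  using assms
proof (induction L rule: finite_induct)
  case empty
  interpret vec_space "TYPE('a)" n .
  have "mat n nc (\<lambda>(i, j). \<Sum>l\<in>{}. u l i * v l j) = 0\<^sub>m n nc"
    by (intro eq_matI) auto
  then show ?case by (simp only: rank_0I card.empty order_refl)
next
  case (insert l L)
  interpret vec_space "TYPE('a)" n .
  let ?M = "\<lambda>L. mat n nc (\<lambda>(i, j). \<Sum>l\<in>L. u l i * v l j)"
  have "?M (insert l L) = ?M L + mat n nc (\<lambda>(i, j). u l i * v l j)"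
    using insert by (intro eq_matI) auto
  moreover have "rank (mat n nc (\<lambda>(i, j). u l i * v l j)) \<le> 1"
    by (rule rank_le_1_product_entries[where f = "u l" and g = "v l"]) auto
  ultimately have "rank (?M (insert l L)) \<le> rank (?M L) + 1"
    using rank_subadditive[of "?M L" nc "mat n nc (\<lambda>(i, j). u l i * v l j)"] by simp
  then show ?case using insert by simp
qed

text \<open>Choosing a nonzero kernel vector and a coordinate of its support minimizing c isolates the
  diagonal entry in the corresponding row.\<close>
lemma det_nonzero_if_triangular_wrt:
  fixes A :: "'a :: field mat" and c :: "nat \<Rightarrow> nat"
  assumes A: "A \<in> carrier_mat n n"
    and diag: "\<And>i. i < n \<Longrightarrow> A $$ (i, i) \<noteq> 0"
    and triangular: "\<And>i j. i < n \<Longrightarrow> j < n \<Longrightarrow> i \<noteq> j \<Longrightarrow> c i \<le> c j \<Longrightarrow> A $$ (i, j) = 0"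
  shows "det A \<noteq> 0"
proof
  assume "det A = 0"
  then obtain v where v: "v \<in> carrier_vec n" "v \<noteq> 0\<^sub>v n" "A *\<^sub>v v = 0\<^sub>v n"
    using det_0_iff_vec_prod_zero_field[OF A] by blast
  have "\<exists>i. i < n \<and> v $ i \<noteq> 0"
    using v(1,2) by (metis carrier_vecD eq_vecI index_zero_vec)
  then obtain i where i: "i < n" "v $ i \<noteq> 0"
    and min: "\<And>j. j < n \<Longrightarrow> v $ j \<noteq> 0 \<Longrightarrow> c i \<le> c j"
    using ex_has_least_nat[of "\<lambda>i. i < n \<and> v $ i \<noteq> 0" _ c] by blast
  have "(A *\<^sub>v v) $ i = (\<Sum>j<n. A $$ (i, j) * v $ j)"
    using A v(1) i by (simp add: mult_mat_vec_def scalar_prod_def lessThan_atLeast0)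
  also have "\<dots> = (\<Sum>j<n. if j = i then A $$ (i, j) * v $ j else 0)"
    using triangular[OF i(1)] min by (intro sum.cong) auto
  also have "\<dots> = A $$ (i, i) * v $ i"
    using i by simp
  finally show False
    using v(3) i diag by simp
qed

lemma rank_sum_triangular_products:
  fixes u :: "nat \<Rightarrow> nat \<Rightarrow> 'a :: field" and w :: "nat \<Rightarrow> 'a" and c :: "nat \<Rightarrow> nat"
  assumes L: "L \<subseteq> {..<n}"
    and diag: "\<And>l. l \<in> L \<Longrightarrow> u l l \<noteq> 0" and w: "\<And>l. l \<in> L \<Longrightarrow> w l \<noteq> 0"
    and triangular: "\<And>i l. i \<in> L \<Longrightarrow> l \<in> L \<Longrightarrow> i \<noteq> l \<Longrightarrow> c i \<le> c l \<Longrightarrow> u l i = 0"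
  shows "vec_space.rank n (mat n n (\<lambda>(i, j). \<Sum>l\<in>L. u l i * w l * u l j)) = card L"
proof (rule antisym)
  interpret vec_space "TYPE('a)" n .
  let ?M = "mat n n (\<lambda>(i, j). \<Sum>l\<in>L. u l i * w l * u l j)"
  let ?m = "card L" and ?p = "pick L"
  have fin: "finite L"
    using L finite_subset by blast
  show "rank ?M \<le> ?m"
    using rank_sum_products_le[OF fin, of n n "\<lambda>l i. u l i * w l" u] by simp
  have pick: "bij_betw ?p {..<?m} L"
    by (rule bij_betw_pick[OF fin])
  have det_weighted: "det (mat ?m ?m (\<lambda>(a, b). u (?p b) (?p a) * z (?p b))) \<noteq> 0"
    if z: "\<And>l. l \<in> L \<Longrightarrow> z l \<noteq> 0" for z
  proof (rule det_nonzero_if_triangular_wrt[where c = "c \<circ> ?p"])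
    fix i j assume ij: "i < ?m" "j < ?m" "i \<noteq> j" and "(c \<circ> ?p) i \<le> (c \<circ> ?p) j"
    moreover have "?p i \<in> L" "?p j \<in> L" "?p i \<noteq> ?p j"
      using pick ij unfolding bij_betw_def inj_on_def by auto
    ultimately show "mat ?m ?m (\<lambda>(a, b). u (?p b) (?p a) * z (?p b)) $$ (i, j) = 0"
      using triangular by simp
  qed (use diag z pick in \<open>auto dest: bij_betwE\<close>)
  let ?X = "mat ?m ?m (\<lambda>(a, b). u (?p b) (?p a) * w (?p b))"
  let ?U = "mat ?m ?m (\<lambda>(a, b). u (?p b) (?p a) * 1)"
  have L_eq: "{i. i < n \<and> i \<in> L} = L"
    using L by auto
  have minor: "submatrix ?M L L = ?X * transpose_mat ?U"
  proof (rule eq_matI)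
    fix a b assume "a < dim_row (?X * transpose_mat ?U)" "b < dim_col (?X * transpose_mat ?U)"
    then have ab: "a < ?m" "b < ?m" by simp_all
    have "submatrix ?M L L $$ (a, b) = (\<Sum>l\<in>L. u l (?p a) * w l * u l (?p b))"
      using ab L pick_in_set[of a L] pick_in_set[of b L]
      by (subst submatrix_index) (auto simp: L_eq subset_iff)
    also have "\<dots> = (\<Sum>k<?m. u (?p k) (?p a) * w (?p k) * u (?p k) (?p b))"
      using sum.reindex_bij_betw[OF pick, of "\<lambda>l. u l (?p a) * w l * u l (?p b)"] by simp
    also have "\<dots> = (?X * transpose_mat ?U) $$ (a, b)"
      using ab by (simp add: scalar_prod_def lessThan_atLeast0)
    finally show "submatrix ?M L L $$ (a, b) = (?X * transpose_mat ?U) $$ (a, b)" .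
  qed (simp_all add: dim_submatrix L_eq)
  have det_minor: "det (submatrix ?M L L) \<noteq> 0"
    unfolding minor using det_weighted[OF w] det_weighted[of "\<lambda>_. 1"]
    by (simp add: det_mult[of _ ?m] det_transpose[of _ ?m])
  have "card {j. j < n \<and> j \<in> L} \<le> rank ?M"
    by (rule rank_gt_minor[OF _ det_minor]) simp
  then show "?m \<le> rank ?M"
    by (simp only: L_eq)
qed

lemma (in group) F_conjugate_iff_conjugate:
  assumes "realizes G S Hom" "P \<in> subs G S" "Q \<in> subs G S"
  shows "F_conjugate Hom P Q \<longleftrightarrow> conjugate P Q"
proof -
  have Hom: "Hom P Q = {cmap G g P | g. g \<in> carrier G \<and> conjm G g ` P \<subseteq> Q}"
    using assms unfolding realizes_def by blast
  have "cmap G g P ` P = conjm G g ` P" for g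
    unfolding cmap_def by simp
  then show ?thesis
    unfolding F_conjugate_def conjugate_def Hom by blast
qed

locale subgroup_classes = group G for G :: "('a, 'b) monoid_scheme" +
  fixes S :: "'a set"
  assumes finite_carrier: "finite (carrier G)" and subgroup_S: "subgroup S G"
begin

abbreviation n_classes :: nat where
  "n_classes \<equiv> card (G_conj_classes G S)"

definition conj_rel :: "('a set \<times> 'a set) set" where
  "conj_rel = {(P, Q). P \<in> subs G S \<and> Q \<in> subs G S \<and> (\<exists>g\<in>carrier G. Q = conjm G g ` P)}"

definition class_enum :: "nat \<Rightarrow> 'a set set" where
  "class_enum = (SOME e. bij_betw e {0..<n_classes} (G_conj_classes G S))"

definition class_rep :: "nat \<Rightarrow> 'a set" where
  "class_rep i = (SOME P. P \<in> class_enum i)"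

definition cyclic_classes :: "nat set" where
  "cyclic_classes = {i. i < n_classes \<and> class_rep i \<in> cyclic_subs G S}"

lemma double_coset_matrix_eq:
  "double_coset_matrix G S =
    mat n_classes n_classes (\<lambda>(i, j). of_nat (card (double_cosets G (class_rep i) (class_rep j))))"
  unfolding double_coset_matrix_def Let_def class_rep_def class_enum_def ..

lemma subs_subgroup: "P \<in> subs G S \<Longrightarrow> subgroup P G"
  unfolding subs_def by blast

lemma subs_subset_carrier: "P \<in> subs G S \<Longrightarrow> P \<subseteq> carrier G"
  unfolding subs_def using subgroup.subset by blast

lemma subs_finite: "P \<in> subs G S \<Longrightarrow> finite P"
  using subs_subset_carrier finite_carrier finite_subset by blast

lemma subs_card_pos: "P \<in> subs G S \<Longrightarrow> card P > 0"
  using subs_finite subs_subgroup subgroup.one_closed card_gt_0_iff by blast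

lemma conj_rel_iff: "(P, Q) \<in> conj_rel \<longleftrightarrow> P \<in> subs G S \<and> Q \<in> subs G S \<and> conjugate P Q"
  unfolding conj_rel_def conjugate_def by simp

lemma equiv_conj_rel: "equiv (subs G S) conj_rel"
proof (rule equivI)
  show "refl_on (subs G S) conj_rel"
    by (rule refl_onI) (simp add: conj_rel_iff conjugate_refl subs_subset_carrier)
  show "sym conj_rel"
    by (rule symI) (metis conj_rel_iff conjugate_sym subs_subset_carrier)
  show "trans conj_rel"
    by (rule transI) (metis conj_rel_iff conjugate_trans subs_subset_carrier)
  show "conj_rel \<subseteq> subs G S \<times> subs G S"
    by (auto simp: conj_rel_def)
qed

lemma G_conj_classes_eq: "G_conj_classes G S = subs G S // conj_rel"
  unfolding G_conj_classes_def conj_rel_def ..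

lemma finite_G_conj_classes: "finite (G_conj_classes G S)"
proof -
  have "subs G S \<subseteq> Pow (carrier G)"
    using subs_subset_carrier by blast
  then show ?thesis
    unfolding G_conj_classes_eq using finite_carrier
    by (meson equiv_conj_rel equiv_type finite_Pow_iff finite_quotient finite_subset)
qed

lemma bij_betw_class_enum: "bij_betw class_enum {0..<n_classes} (G_conj_classes G S)"
  unfolding class_enum_def by (rule someI_ex[OF ex_bij_betw_nat_finite[OF finite_G_conj_classes]])

lemma class_rep_represents:
  assumes "i < n_classes"
  shows "class_rep i \<in> subs G S" and "class_enum i = conj_rel `` {class_rep i}"
proof -
  have "class_enum i \<in> subs G S // conj_rel"
    using bij_betw_class_enum assms unfolding bij_betw_def G_conj_classes_eq by auto
  then obtain P where P: "P \<in> subs G S" "class_enum i = conj_rel `` {P}"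
    by (rule quotientE)
  then have "P \<in> class_enum i"
    using equiv_class_self[OF equiv_conj_rel] by simp
  then have "class_rep i \<in> class_enum i"
    unfolding class_rep_def by (rule someI)
  then show "class_rep i \<in> subs G S" "class_enum i = conj_rel `` {class_rep i}"
    using P equiv_class_eq[OF equiv_conj_rel] by (auto simp: conj_rel_def)
qed

lemma class_rep_conjugate_imp_eq:
  assumes "i < n_classes" "j < n_classes" "conjugate (class_rep i) (class_rep j)"
  shows "i = j"
proof -
  have "class_enum i = class_enum j"
    using assms class_rep_represents equiv_class_eq[OF equiv_conj_rel] conj_rel_iff by metis
  then show ?thesis
    using bij_betw_class_enum assms(1,2) unfolding bij_betw_def inj_on_def by auto
qed

lemma ex_class_rep_conjugate:
  assumes "P \<in> subs G S"
  shows "\<exists>i<n_classes. conjugate P (class_rep i)"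
proof -
  have "conj_rel `` {P} \<in> class_enum ` {0..<n_classes}"
    using bij_betw_class_enum quotientI[OF assms]
    unfolding bij_betw_def G_conj_classes_eq by simp
  then obtain i where i: "i < n_classes" "class_enum i = conj_rel `` {P}"
    by auto
  then have "(P, class_rep i) \<in> conj_rel"
    using class_rep_represents[OF i(1)] equiv_class_self[OF equiv_conj_rel, of "class_rep i"] by simp
  then show ?thesis
    using i conj_rel_iff by blast
qed

lemma generate_singleton_subs: "x \<in> S \<Longrightarrow> generate G {x} \<in> subs G S"
  unfolding subs_def using subgroup.subset[OF subgroup_S] generate_is_subgroup
    generate_subgroup_incl[OF _ subgroup_S]
  by auto

lemma cyclic_subs_subset: "cyclic_subs G S \<subseteq> subs G S"
  unfolding cyclic_subs_def using generate_singleton_subs by blast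

lemma conjugate_generate_in_cyclic_subs:
  assumes "y \<in> carrier G" "h \<in> carrier G" "conjm G h ` generate G {y} \<subseteq> S"
  shows "generate G {conjm G h y} \<in> cyclic_subs G S"
  using assms generate.incl[of y "{y}" G] unfolding cyclic_subs_def by blast

lemma conjugate_cyclic_subs:
  assumes A: "A \<in> cyclic_subs G S" and B: "B \<in> subs G S" and AB: "conjugate A B"
  shows "B \<in> cyclic_subs G S"
proof -
  obtain x where x: "x \<in> S" "A = generate G {x}"
    using A unfolding cyclic_subs_def by blast
  obtain g where g: "g \<in> carrier G" "B = conjm G g ` A"
    using AB unfolding conjugate_def by blast
  have "B \<subseteq> S"
    using B unfolding subs_def by blast
  then show ?thesis
    using conjugate_generate_in_cyclic_subs g x subgroup.subset[OF subgroup_S]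
      image_conjm_generate by auto
qed

lemma ex_cyclic_class_conjugate:
  assumes "A \<in> cyclic_subs G S"
  shows "\<exists>i\<in>cyclic_classes. conjugate A (class_rep i)"
  using ex_class_rep_conjugate[of A] assms cyclic_subs_subset class_rep_represents(1)
    conjugate_cyclic_subs unfolding cyclic_classes_def by blast

end

context subgroup_classes
begin

definition class_generators :: "nat \<Rightarrow> 'a set" where
  "class_generators i = {y \<in> carrier G. conjugate (generate G {y}) (class_rep i)}"

definition transporter_ratio :: "nat \<Rightarrow> 'a set \<Rightarrow> rat" where
  "transporter_ratio i P = of_nat (card (transporter G (class_rep i) P)) / of_nat (card P)"

definition class_weight :: "nat \<Rightarrow> rat" where
  "class_weight i = of_nat (card (class_generators i)) / of_nat (card (carrier G))"

lemma finite_cyclic_classes: "finite cyclic_classes"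
  unfolding cyclic_classes_def by simp

lemma transporter_nonempty_imp_cyclic_class:
  assumes y: "y \<in> carrier G" and P: "P \<in> subs G S" and h: "h \<in> transporter G (generate G {y}) P"
  shows "\<exists>i\<in>cyclic_classes. conjugate (generate G {y}) (class_rep i)"
proof -
  have h': "h \<in> carrier G" "conjm G h ` generate G {y} \<subseteq> P"
    using h by (simp_all add: transporter_def)
  then have "generate G {conjm G h y} \<in> cyclic_subs G S"
    using conjugate_generate_in_cyclic_subs[OF y] P unfolding subs_def by blast
  then obtain i where "i \<in> cyclic_classes" "conjugate (generate G {conjm G h y}) (class_rep i)"
    using ex_cyclic_class_conjugate by blast
  then show ?thesis
    using conjugate_trans[OF _ conjugate_generate[OF h'(1) y]] generate_incl y by blast
qed

lemma class_rep_unique: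
  assumes A: "A \<subseteq> carrier G" and ij: "i < n_classes" "j < n_classes"
    and "conjugate A (class_rep i)" "conjugate A (class_rep j)"
  shows "i = j"
proof -
  have "conjugate (class_rep i) A"
    using conjugate_sym A assms(4) by blast
  then have "conjugate (class_rep i) (class_rep j)"
    using conjugate_trans subs_subset_carrier[OF class_rep_represents(1)[OF ij(1)]] assms(5) by blast
  then show ?thesis
    using class_rep_conjugate_imp_eq ij by blast
qed

lemma transporter_product_eq_sum:
  assumes y: "y \<in> carrier G" and P: "P \<in> subs G S" and Q: "Q \<in> subs G S"
  shows "card (transporter G {y} P) * card (transporter G {y} Q) =
    (\<Sum>i\<in>cyclic_classes. if conjugate (generate G {y}) (class_rep i)
      then card (transporter G (class_rep i) P) * card (transporter G (class_rep i) Q) else 0)"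
proof -
  have gen_y: "generate G {y} \<subseteq> carrier G"
    using generate_incl y by blast
  have t: "card (transporter G {y} R) = card (transporter G (generate G {y}) R)" if "R \<in> subs G S" for R
    using transporter_generate[OF y subs_subgroup[OF that]] by simp
  show ?thesis
  proof (cases "\<exists>i\<in>cyclic_classes. conjugate (generate G {y}) (class_rep i)")
    case True
    then obtain i where i: "i \<in> cyclic_classes" "conjugate (generate G {y}) (class_rep i)"
      by blast
    have unique: "conjugate (generate G {y}) (class_rep i') \<longleftrightarrow> i' = i" if "i' \<in> cyclic_classes" for i'
      using class_rep_unique[OF gen_y] i that unfolding cyclic_classes_def by blast
    have "(\<Sum>i'\<in>cyclic_classes. if conjugate (generate G {y}) (class_rep i')
        then card (transporter G (class_rep i') P) * card (transporter G (class_rep i') Q) else 0) =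
      card (transporter G (class_rep i) P) * card (transporter G (class_rep i) Q)"
      using i(1) by (simp add: unique finite_cyclic_classes cong: sum.cong)
    then show ?thesis
      using i(2) t P Q card_transporter_conjugate[OF gen_y] by simp
  next
    case False
    then have "transporter G (generate G {y}) P = {}"
      using transporter_nonempty_imp_cyclic_class[OF y P] by blast
    then show ?thesis
      using False t[OF P] by simp
  qed
qed

lemma sum_transporter_products_eq:
  assumes P: "P \<in> subs G S" and Q: "Q \<in> subs G S"
  shows "(\<Sum>y\<in>carrier G. card (transporter G {y} P) * card (transporter G {y} Q)) =
    (\<Sum>i\<in>cyclic_classes. card (transporter G (class_rep i) P) * card (transporter G (class_rep i) Q)
      * card (class_generators i))"
proof -
  have "(\<Sum>y\<in>carrier G. card (transporter G {y} P) * card (transporter G {y} Q)) =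
    (\<Sum>i\<in>cyclic_classes. \<Sum>y\<in>carrier G. if conjugate (generate G {y}) (class_rep i)
      then card (transporter G (class_rep i) P) * card (transporter G (class_rep i) Q) else 0)"
    using transporter_product_eq_sum[OF _ P Q] sum.swap by (simp cong: sum.cong)
  also have "\<dots> = (\<Sum>i\<in>cyclic_classes. card (transporter G (class_rep i) P)
      * card (transporter G (class_rep i) Q) * card (class_generators i))"
    using finite_carrier by (simp add: class_generators_def sum.inter_filter[symmetric] ac_simps)
  finally show ?thesis .
qed

lemma card_double_cosets_eq_sum:
  assumes P: "P \<in> subs G S" and Q: "Q \<in> subs G S"
  shows "of_nat (card (double_cosets G P Q)) =
    (\<Sum>i\<in>cyclic_classes. transporter_ratio i P * class_weight i * transporter_ratio i Q)"
proof -
  let ?tP = "\<lambda>i. card (transporter G (class_rep i) P)" and ?tQ = "\<lambda>i. card (transporter G (class_rep i) Q)"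
  define D where "D = (of_nat (card P) * of_nat (card Q) * of_nat (card (carrier G)) :: rat)"
  have "card (carrier G) > 0"
    using finite_carrier card_gt_0_iff by blast
  then have "D \<noteq> 0"
    unfolding D_def using subs_card_pos P Q by simp
  have nat_eq: "card (double_cosets G P Q) * (card P * card Q) * card (carrier G) =
      (\<Sum>i\<in>cyclic_classes. ?tP i * ?tQ i * card (class_generators i))"
    using card_double_cosets_formula[OF subs_subgroup[OF P] subs_subgroup[OF Q] finite_carrier]
      sum_transporter_products_eq[OF P Q] by simp
  have "of_nat (card (double_cosets G P Q)) * D =
      (\<Sum>i\<in>cyclic_classes. of_nat (?tP i) * of_nat (?tQ i) * of_nat (card (class_generators i)))"
    using arg_cong[OF nat_eq, of "of_nat :: nat \<Rightarrow> rat"] unfolding D_def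
    by (simp only: of_nat_mult of_nat_sum mult.assoc)
  then have "of_nat (card (double_cosets G P Q)) =
      (\<Sum>i\<in>cyclic_classes. of_nat (?tP i) * of_nat (?tQ i) * of_nat (card (class_generators i)) / D)"
    using \<open>D \<noteq> 0\<close> by (simp add: eq_divide_eq sum_divide_distrib[symmetric])
  also have "\<dots> = (\<Sum>i\<in>cyclic_classes. transporter_ratio i P * class_weight i * transporter_ratio i Q)"
    unfolding transporter_ratio_def class_weight_def D_def by (simp add: ac_simps)
  finally show ?thesis .
qed

lemma transporter_ratio_self_nonzero:
  assumes "i < n_classes"
  shows "transporter_ratio i (class_rep i) \<noteq> 0"
proof -
  have rep: "class_rep i \<in> subs G S"
    by (rule class_rep_represents(1)[OF assms])
  have "\<one>\<^bsub>G\<^esub> \<in> transporter G (class_rep i) (class_rep i)"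
    using image_conjm_one[OF subs_subset_carrier[OF rep]] by (simp add: transporter_def)
  moreover have "finite (transporter G (class_rep i) (class_rep i))"
    using finite_carrier finite_subset by (fastforce simp: transporter_def)
  ultimately show ?thesis
    unfolding transporter_ratio_def using subs_card_pos[OF rep] card_gt_0_iff by fastforce
qed

lemma class_weight_nonzero:
  assumes "i \<in> cyclic_classes"
  shows "class_weight i \<noteq> 0"
proof -
  obtain x where x: "x \<in> S" "class_rep i = generate G {x}"
    using assms unfolding cyclic_classes_def cyclic_subs_def by blast
  then have "x \<in> class_generators i"
    using subgroup.subset[OF subgroup_S] conjugate_refl[OF generate_incl]
    by (auto simp: class_generators_def)
  moreover have "finite (class_generators i)" "card (carrier G) > 0"
    using finite_carrier card_gt_0_iff by (auto simp: class_generators_def)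
  ultimately show ?thesis
    unfolding class_weight_def using card_gt_0_iff by fastforce
qed

text \<open>A conjugate of class_rep j inside the no larger class_rep i would be all of it.\<close>
lemma transporter_ratio_eq_zero:
  assumes ij: "i < n_classes" "j < n_classes" "i \<noteq> j"
    and card_le: "card (class_rep i) \<le> card (class_rep j)"
  shows "transporter_ratio j (class_rep i) = 0"
proof -
  have "transporter G (class_rep j) (class_rep i) = {}"
  proof (rule ccontr)
    assume "transporter G (class_rep j) (class_rep i) \<noteq> {}"
    then obtain h where h: "h \<in> carrier G" "conjm G h ` class_rep j \<subseteq> class_rep i"
      unfolding transporter_def by blast
    have sub_j: "class_rep j \<subseteq> carrier G"
      using subs_subset_carrier class_rep_represents(1)[OF ij(2)] by blast
    have conj: "conjugate (class_rep j) (conjm G h ` class_rep j)"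
      unfolding conjugate_def using h by blast
    then have "conjm G h ` class_rep j = class_rep i"
      using card_seteq[OF subs_finite[OF class_rep_represents(1)[OF ij(1)]] h(2)] card_le
        conjugate_card[OF sub_j] by simp
    then show False
      using conj class_rep_conjugate_imp_eq ij by metis
  qed
  then show ?thesis
    unfolding transporter_ratio_def by simp
qed

lemma rank_double_coset_matrix:
  "vec_space.rank n_classes (double_coset_matrix G S) = card cyclic_classes"
proof -
  have "double_coset_matrix G S = mat n_classes n_classes (\<lambda>(i, j). \<Sum>l\<in>cyclic_classes.
      transporter_ratio l (class_rep i) * class_weight l * transporter_ratio l (class_rep j))"
    unfolding double_coset_matrix_eq
    by (intro eq_matI) (simp_all add: card_double_cosets_eq_sum class_rep_represents(1))
  also have "vec_space.rank n_classes \<dots> = card cyclic_classes"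
    by (rule rank_sum_triangular_products[where c = "card \<circ> class_rep"])
      (auto simp: cyclic_classes_def transporter_ratio_self_nonzero class_weight_nonzero
        transporter_ratio_eq_zero)
  finally show ?thesis .
qed

lemma F_classes_cyclic_eq_image:
  assumes "realizes G S Hom"
  shows "F_classes_cyclic G S Hom = (\<lambda>P. conj_rel `` {P}) ` cyclic_subs G S"
proof -
  have "{(P, Q). P \<in> cyclic_subs G S \<and> Q \<in> cyclic_subs G S \<and> F_conjugate Hom P Q} `` {P}
      = conj_rel `` {P}" if P: "P \<in> cyclic_subs G S" for P
  proof (intro equalityI subsetI)
    fix Q assume "Q \<in> {(P, Q). P \<in> cyclic_subs G S \<and> Q \<in> cyclic_subs G S \<and> F_conjugate Hom P Q} `` {P}"
    then show "Q \<in> conj_rel `` {P}"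
      using P cyclic_subs_subset F_conjugate_iff_conjugate[OF assms] by (auto simp: conj_rel_iff)
  next
    fix Q assume "Q \<in> conj_rel `` {P}"
    then show "Q \<in> {(P, Q). P \<in> cyclic_subs G S \<and> Q \<in> cyclic_subs G S \<and> F_conjugate Hom P Q} `` {P}"
      using P conjugate_cyclic_subs F_conjugate_iff_conjugate[OF assms] by (auto simp: conj_rel_iff)
  qed
  then show ?thesis
    unfolding F_classes_cyclic_def quotient_def by auto
qed

lemma image_class_enum_cyclic_classes:
  "class_enum ` cyclic_classes = (\<lambda>P. conj_rel `` {P}) ` cyclic_subs G S"
proof (intro equalityI subsetI)
  fix C assume "C \<in> class_enum ` cyclic_classes"
  then show "C \<in> (\<lambda>P. conj_rel `` {P}) ` cyclic_subs G S"
    using class_rep_represents(2) unfolding cyclic_classes_def by blast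
next
  fix C assume "C \<in> (\<lambda>P. conj_rel `` {P}) ` cyclic_subs G S"
  then obtain P where P: "P \<in> cyclic_subs G S" "C = conj_rel `` {P}"
    by blast
  then obtain i where i: "i \<in> cyclic_classes" "conjugate P (class_rep i)"
    using ex_cyclic_class_conjugate by blast
  then have "(P, class_rep i) \<in> conj_rel"
    using P cyclic_subs_subset class_rep_represents(1) conj_rel_iff unfolding cyclic_classes_def by blast
  then have "C = class_enum i"
    using P i class_rep_represents(2) equiv_class_eq[OF equiv_conj_rel]
    unfolding cyclic_classes_def by auto
  then show "C \<in> class_enum ` cyclic_classes"
    using i by blast
qed

lemma card_F_classes_cyclic:
  assumes "realizes G S Hom"
  shows "card (F_classes_cyclic G S Hom) = card cyclic_classes"
proof -
  have "inj_on class_enum cyclic_classes"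
    using bij_betw_class_enum unfolding bij_betw_def cyclic_classes_def
    by (auto intro: inj_on_subset)
  then show ?thesis
    using F_classes_cyclic_eq_image[OF assms] image_class_enum_cyclic_classes
    by (metis card_image)
qed

end

theorem theorem1p2:
  fixes G :: "('a, 'b) monoid_scheme" and S :: "'a set" and p :: nat
    and Hom :: "'a set \<Rightarrow> 'a set \<Rightarrow> ('a \<Rightarrow> 'a) set"
  assumes "Factorial_Ring.prime p"
    and "group G" and "finite (carrier G)"
    and "subgroup S G" and "\<exists>n. card S = p ^ n"
    and "fusion_system G S Hom" and "saturated p G S Hom"
    and "realizes G S Hom"
  shows "vec_space.rank (card (G_conj_classes G S)) (double_coset_matrix G S)
           = card (F_classes_cyclic G S Hom)"
proof -
  interpret subgroup_classes G S
    using assms(2-4) by (simp add: subgroup_classes_def subgroup_classes_axioms_def)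
  show ?thesis
    using rank_double_coset_matrix card_F_classes_cyclic[OF assms(8)] by simp
qed

end
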